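(* Let $\mathbf G$ be a finite group and let $p_1,\dots,p_n$ ($n\ge 2$) be all the distinct prime divisors of $\lvert G\rvert$. Let $\Gamma=\mathcal G_e(\mathbf G)$ and $\Gamma_{p_i}=\Gamma[G_{p_i}]$. Suppose that for each $i>2$, $\mathbf G$ has a unique Sylow $p_i$-subgroup and it is cyclic. Then the strong product $\Gamma_{p_1}\boxtimes\Gamma_{p_2}\boxtimes\cdots\boxtimes\Gamma_{p_n}$ is a Berge graph.
   Context: The enhanced power graph $\mathcal G_e(\mathbf G)$ has vertex set $G$, distinct $x,y$ adjacent iff $\langle x,y\rangle$ is cyclic. For a prime $p$, $G_p$ is the set of elements of $\mathbf G$ whose order is a power of $p$ (including the identity); $\Gamma[X]$ is the induced subgraph on $X$. The strong product $\boxtimes_{i=1}^n\Gamma_i$ has vertex set $\prod_i V(\Gamma_i)$, and distinct tuples $\bar x,\bar y$ are adjacent iff for every $i$, $\bar x(i)=\bar y(i)$ or $\bar x(i)\sim_{\Gamma_i}\bar y(i)$. A graph is Berge if neither it nor its complement contains an induced cycle of odd length at least $5$. *)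

theory Defs
  imports "HOL-Algebra.Algebra" "HOL-Library.FuncSet"
begin

text \<open>Graphs are given by a vertex set V and an adjacency relation E (only used on V).\<close>

definition enh_adj :: "('a, 'b) monoid_scheme \<Rightarrow> 'a \<Rightarrow> 'a \<Rightarrow> bool" where
  "enh_adj G x y \<longleftrightarrow> x \<noteq> y \<and> cyclic_group (subgroup_generated G {x, y})"

definition p_elements :: "('a, 'b) monoid_scheme \<Rightarrow> nat \<Rightarrow> 'a set" where
  "p_elements G p = {x \<in> carrier G. \<exists>k::nat. group.ord G x = p ^ k}"

definition strong_prod_vert :: "nat \<Rightarrow> (nat \<Rightarrow> 'a set) \<Rightarrow> (nat \<Rightarrow> 'a) set" where
  "strong_prod_vert n V = PiE {..<n} V"

definition strong_prod_adj :: "nat \<Rightarrow> (nat \<Rightarrow> 'a \<Rightarrow> 'a \<Rightarrow> bool) \<Rightarrow> (nat \<Rightarrow> 'a) \<Rightarrow> (nat \<Rightarrow> 'a) \<Rightarrow> bool" where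
  "strong_prod_adj n E f g \<longleftrightarrow> f \<noteq> g \<and> (\<forall>i<n. f i = g i \<or> E i (f i) (g i))"

definition compl_adj :: "('a \<Rightarrow> 'a \<Rightarrow> bool) \<Rightarrow> 'a \<Rightarrow> 'a \<Rightarrow> bool" where
  "compl_adj E x y \<longleftrightarrow> x \<noteq> y \<and> \<not> E x y"

definition has_induced_cycle :: "'a set \<Rightarrow> ('a \<Rightarrow> 'a \<Rightarrow> bool) \<Rightarrow> nat \<Rightarrow> bool" where
  "has_induced_cycle V E k \<longleftrightarrow> (\<exists>c :: nat \<Rightarrow> 'a. inj_on c {..<k} \<and> c ` {..<k} \<subseteq> V \<and>
     (\<forall>i<k. \<forall>j<k. E (c i) (c j) \<longleftrightarrow> (j = (i + 1) mod k \<or> i = (j + 1) mod k)))"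

definition berge :: "'a set \<Rightarrow> ('a \<Rightarrow> 'a \<Rightarrow> bool) \<Rightarrow> bool" where
  "berge V E \<longleftrightarrow> (\<forall>k. odd k \<and> k \<ge> 5 \<longrightarrow>
      \<not> has_induced_cycle V E k \<and> \<not> has_induced_cycle V (compl_adj E) k)"

definition sylow_subgroups :: "('a, 'b) monoid_scheme \<Rightarrow> nat \<Rightarrow> 'a set set" where
  "sylow_subgroups G p = {P. subgroup P G \<and> card P = p ^ multiplicity p (order G)}"

end

theory Submission
  imports Defs
begin

text \<open>On the p-elements, distinct vertices of the enhanced power graph are adjacent iff one
  lies in the cyclic subgroup generated by the other. The cyclic subgroups of a cyclic p-group
  form a chain, so this is the comparability graph of a forest order and contains no induced
  path or cycle on four vertices. Every factor but the first two is complete, since its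
  elements lie in the cyclic normal Sylow subgroup. Hence two distinct non-adjacent tuples are
  non-adjacent already in the first or the second coordinate, and along an odd hole or an odd
  antihole the absence of induced four-vertex paths and cycles in those two factors yields a
  parity contradiction.\<close>

text \<open>Every walk a, b, c, d has a chord; on four distinct vertices this forbids induced paths
  and cycles of length four, i.e. these are the trivially perfect graphs.\<close>

definition trivially_perfect :: "'a set \<Rightarrow> ('a \<Rightarrow> 'a \<Rightarrow> bool) \<Rightarrow> bool" where
  "trivially_perfect V E \<longleftrightarrow> (\<forall>a\<in>V. \<forall>b\<in>V. \<forall>c\<in>V. \<forall>d\<in>V.
     E\<^sup>=\<^sup>= a b \<longrightarrow> E\<^sup>=\<^sup>= b c \<longrightarrow> E\<^sup>=\<^sup>= c d \<longrightarrow> E\<^sup>=\<^sup>= a c \<or> E\<^sup>=\<^sup>= b d)"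

lemma trivially_perfect_comparability:
  assumes comparable: "\<And>x y. x \<in> V \<Longrightarrow> y \<in> V \<Longrightarrow> E\<^sup>=\<^sup>= x y \<longleftrightarrow> below x y \<or> below y x"
    and trans: "\<And>x y z. x \<in> V \<Longrightarrow> y \<in> V \<Longrightarrow> z \<in> V \<Longrightarrow> below x y \<Longrightarrow> below y z \<Longrightarrow> below x z"
    and lower_chain: "\<And>x y z. x \<in> V \<Longrightarrow> y \<in> V \<Longrightarrow> z \<in> V \<Longrightarrow> below x z \<Longrightarrow> below y z \<Longrightarrow> below x y \<or> below y x"
  shows "trivially_perfect V E"
  unfolding trivially_perfect_def
proof (intro ballI impI)
  fix a b c d assume V: "a \<in> V" "b \<in> V" "c \<in> V" "d \<in> V"
    and "E\<^sup>=\<^sup>= a b" "E\<^sup>=\<^sup>= b c" "E\<^sup>=\<^sup>= c d"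
  then have "below a b \<or> below b a" "below b c \<or> below c b" "below c d \<or> below d c"
    using comparable by blast+
  then have "(below a c \<or> below c a) \<or> (below b d \<or> below d b)"
    using trans[OF V(1-3)] trans[OF V(3,2,1)] trans[OF V(2-4)]
      lower_chain[OF V(1,3,2)] lower_chain[OF V(2,4,3)] by blast
  then show "E\<^sup>=\<^sup>= a c \<or> E\<^sup>=\<^sup>= b d"
    using comparable V by blast
qed

text \<open>Along a hole, whether S relates c i and c (i + 2) must alternate, which is
  impossible for odd length.\<close>

lemma no_odd_hole:
  assumes nonadj: "\<And>x y. x \<in> V \<Longrightarrow> y \<in> V \<Longrightarrow> x \<noteq> y \<Longrightarrow> \<not> E x y \<Longrightarrow> \<not> S x y \<or> \<not> T x y"
    and chord_S: "\<And>a b c d. a \<in> V \<Longrightarrow> b \<in> V \<Longrightarrow> c \<in> V \<Longrightarrow> d \<in> V \<Longrightarrow>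
        E a b \<Longrightarrow> E b c \<Longrightarrow> E c d \<Longrightarrow> S a c \<or> S b d"
    and chord_T: "\<And>a b c d. a \<in> V \<Longrightarrow> b \<in> V \<Longrightarrow> c \<in> V \<Longrightarrow> d \<in> V \<Longrightarrow>
        E a b \<Longrightarrow> E b c \<Longrightarrow> E c d \<Longrightarrow> T a c \<or> T b d"
    and k: "odd k" "5 \<le> k"
  shows "\<not> has_induced_cycle V E k"
proof
  assume "has_induced_cycle V E k"
  then obtain c where inj: "inj_on c {..<k}" and cV: "c ` {..<k} \<subseteq> V"
    and adj: "\<And>i j. i < k \<Longrightarrow> j < k \<Longrightarrow> E (c i) (c j) \<longleftrightarrow> j = (i + 1) mod k \<or> i = (j + 1) mod k"
    unfolding has_induced_cycle_def by blast
  define s where "s i = (i + 1) mod k" for i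
  have s_lt: "s i < k" for i
    using k unfolding s_def by simp
  have cV': "c i \<in> V" if "i < k" for i
    using cV that by blast
  have edge: "E (c i) (c (s i))" if "i < k" for i
    using adj[OF that s_lt] unfolding s_def by blast
  define A where "A i \<longleftrightarrow> S (c i) (c (s (s i)))" for i
  have A_or_A: "A i \<or> A (s i)" if "i < k" for i
    unfolding A_def using chord_S[OF cV' cV' cV' cV' edge edge edge] that s_lt by blast
  have not_A_and_T: "\<not> (A i \<and> T (c i) (c (s (s i))))" if "i < k" for i
  proof -
    have "s (s i) \<noteq> s i \<and> i \<noteq> s (s (s i)) \<and> i \<noteq> s (s i)"
      using that k unfolding s_def by (auto simp: mod_Suc)
    then show ?thesis
      using nonadj[OF cV' cV'] adj inj that s_lt unfolding A_def s_def inj_on_def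
      by (metis lessThan_iff)
  qed
  have "T (c i) (c (s (s i))) \<or> T (c (s i)) (c (s (s (s i))))" if "i < k" for i
    using chord_T[OF cV' cV' cV' cV' edge edge edge] that s_lt by blast
  then have alternate: "A (s i) \<longleftrightarrow> \<not> A i" if "i < k" for i
    using A_or_A not_A_and_T that s_lt by blast
  have A_parity: "A i \<longleftrightarrow> (A 0 \<longleftrightarrow> even i)" if "i < k" for i
    using that
  proof (induction i)
    case (Suc i)
    then have "s i = Suc i" unfolding s_def by simp
    then show ?case using Suc alternate[of i] by auto
  qed simp
  have "s (k - 1) = 0"
    using k unfolding s_def by simp
  then have "A 0 \<longleftrightarrow> \<not> A (k - 1)"
    using alternate[of "k - 1"] k by simp
  moreover have "A (k - 1) \<longleftrightarrow> A 0"
    using A_parity[of "k - 1"] k by simp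
  ultimately show False by blast
qed

text \<open>Along an antihole, let A i and B i say that S resp. T relates c i and c (i + 1). The
  walks among c 0, ..., c 4 give A u \<or> A v and B u \<or> B v for every edge u v of the 5-cycle
  0, 2, 4, 1, 3; so the sets where A resp. B fails are independent in it, and they cannot cover
  it since it is not bipartite.\<close>

lemma no_antihole:
  assumes nonadj: "\<And>x y. x \<in> V \<Longrightarrow> y \<in> V \<Longrightarrow> x \<noteq> y \<Longrightarrow> \<not> E x y \<Longrightarrow> \<not> S x y \<or> \<not> T x y"
    and chord_S: "\<And>a b c d. a \<in> V \<Longrightarrow> b \<in> V \<Longrightarrow> c \<in> V \<Longrightarrow> d \<in> V \<Longrightarrow>
        E a b \<Longrightarrow> E b c \<Longrightarrow> E c d \<Longrightarrow> S a c \<or> S b d"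
    and chord_T: "\<And>a b c d. a \<in> V \<Longrightarrow> b \<in> V \<Longrightarrow> c \<in> V \<Longrightarrow> d \<in> V \<Longrightarrow>
        E a b \<Longrightarrow> E b c \<Longrightarrow> E c d \<Longrightarrow> T a c \<or> T b d"
    and k: "5 \<le> k"
  shows "\<not> has_induced_cycle V (compl_adj E) k"
proof
  assume "has_induced_cycle V (compl_adj E) k"
  then obtain c where inj: "inj_on c {..<k}" and cV: "c ` {..<k} \<subseteq> V"
    and adj: "\<And>i j. i < k \<Longrightarrow> j < k \<Longrightarrow>
      compl_adj E (c i) (c j) \<longleftrightarrow> j = (i + 1) mod k \<or> i = (j + 1) mod k"
    unfolding has_induced_cycle_def by blast
  define s where "s i = (i + 1) mod k" for i
  have s_lt: "s i < k" for i
    using k unfolding s_def by simp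
  have cV': "c i \<in> V" if "i < k" for i
    using cV that by blast
  have far: "E (c i) (c j)" if "i < k" "j < k" "i \<noteq> j" "j \<noteq> s i" "i \<noteq> s j" for i j
    using adj[OF that(1,2)] inj that unfolding compl_adj_def s_def inj_on_def by blast
  define A where "A i \<longleftrightarrow> S (c i) (c (s i))" for i
  define B where "B i \<longleftrightarrow> T (c i) (c (s i))" for i
  have not_A_and_B: "\<not> (A i \<and> B i)" if "i < k" for i
    using nonadj[OF cV' cV'] adj[OF that s_lt] that s_lt
    unfolding A_def B_def compl_adj_def s_def by blast
  have chord: "(A u \<or> A v) \<and> (B u \<or> B v)"
    if "u < k" "v < k" "E (c u) (c v)" "E (c v) (c (s u))" "E (c (s u)) (c (s v))" for u v
    using chord_S[OF cV' cV' cV' cV' that(3-5)] chord_T[OF cV' cV' cV' cV' that(3-5)] that s_lt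
    unfolding A_def B_def by blast
  have s_small: "s 0 = 1" "s 1 = 2" "s 2 = 3" "s 3 = 4"
    using k unfolding s_def by simp_all
  have s_4: "s 4 \<noteq> 1" "s 4 \<noteq> 2" "s 4 \<noteq> 3" "s 4 \<noteq> 4" "s (s 4) \<noteq> 2" "s (s 4) \<noteq> 3"
    using k unfolding s_def by (cases "k = 5 \<or> k = 6"; auto)+
  have "(A 2 \<or> A 0) \<and> (B 2 \<or> B 0)" "(A 3 \<or> A 1) \<and> (B 3 \<or> B 1)"
    "(A 4 \<or> A 2) \<and> (B 4 \<or> B 2)" "(A 0 \<or> A 3) \<and> (B 0 \<or> B 3)" "(A 1 \<or> A 4) \<and> (B 1 \<or> B 4)"
    by (intro chord far; use k s_lt s_small s_4 in simp)+
  moreover have "\<not> (A 0 \<and> B 0)" "\<not> (A 1 \<and> B 1)" "\<not> (A 2 \<and> B 2)"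
    "\<not> (A 3 \<and> B 3)" "\<not> (A 4 \<and> B 4)"
    using not_A_and_B k by simp_all
  ultimately show False by blast
qed

lemma strong_prod_adj_reflclp:
  assumes "strong_prod_adj n E f g" "i < n"
  shows "(E i)\<^sup>=\<^sup>= (f i) (g i)"
  using assms unfolding strong_prod_adj_def by auto

lemma berge_strong_prod:
  assumes n: "2 \<le> n"
    and trivially_perfect: "\<And>i. i < n \<Longrightarrow> trivially_perfect (V i) (E i)"
    and complete: "\<And>i x y. 2 \<le> i \<Longrightarrow> i < n \<Longrightarrow> x \<in> V i \<Longrightarrow> y \<in> V i \<Longrightarrow> (E i)\<^sup>=\<^sup>= x y"
  shows "berge (strong_prod_vert n V) (strong_prod_adj n E)"
proof -
  let ?V = "strong_prod_vert n V" and ?E = "strong_prod_adj n E"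
  define S where "S i f g \<longleftrightarrow> (E i)\<^sup>=\<^sup>= (f i) (g i)" for i f g
  have coord: "f i \<in> V i" if "f \<in> ?V" "i < n" for f i
    using that unfolding strong_prod_vert_def by auto
  have chord: "S i a c \<or> S i b d"
    if "i < n" "a \<in> ?V" "b \<in> ?V" "c \<in> ?V" "d \<in> ?V" "?E a b" "?E b c" "?E c d" for i a b c d
    using trivially_perfect[OF that(1)] coord[OF _ that(1)] that(2-5)
      strong_prod_adj_reflclp[OF that(6,1)] strong_prod_adj_reflclp[OF that(7,1)]
      strong_prod_adj_reflclp[OF that(8,1)]
    unfolding trivially_perfect_def S_def by blast
  have nonadj: "\<not> S 0 f g \<or> \<not> S 1 f g" if fg: "f \<in> ?V" "g \<in> ?V" "f \<noteq> g" "\<not> ?E f g" for f g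
  proof -
    obtain i where "i < n" "\<not> (E i)\<^sup>=\<^sup>= (f i) (g i)"
      using fg(3,4) unfolding strong_prod_adj_def by auto
    moreover from this have "i < 2"
      using complete coord fg(1,2) by (meson not_less)
    ultimately show ?thesis
      unfolding S_def by (auto simp: less_2_cases_iff)
  qed
  have "0 < n" "1 < n"
    using n by simp_all
  have chord_0: "S 0 a c \<or> S 0 b d"
    if "a \<in> ?V" "b \<in> ?V" "c \<in> ?V" "d \<in> ?V" "?E a b" "?E b c" "?E c d" for a b c d
    using chord[OF \<open>0 < n\<close> that] .
  have chord_1: "S 1 a c \<or> S 1 b d"
    if "a \<in> ?V" "b \<in> ?V" "c \<in> ?V" "d \<in> ?V" "?E a b" "?E b c" "?E c d" for a b c d
    using chord[OF \<open>1 < n\<close> that] .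
  show ?thesis
    unfolding berge_def
  proof (intro allI impI conjI)
    fix k :: nat assume k: "odd k \<and> 5 \<le> k"
    show "\<not> has_induced_cycle ?V ?E k"
      using no_odd_hole[where S = "S 0" and T = "S 1", OF nonadj chord_0 chord_1] k by blast
    show "\<not> has_induced_cycle ?V (compl_adj ?E) k"
      using no_antihole[where S = "S 0" and T = "S 1", OF nonadj chord_0 chord_1] k by blast
  qed
qed

lemma enh_adj_sym: "enh_adj G x y \<longleftrightarrow> enh_adj G y x"
  unfolding enh_adj_def by (auto simp: insert_commute)

context group
begin

lemma generate_singleton_subset:
  assumes "x \<in> generate G {y}" "y \<in> carrier G"
  shows "generate G {x} \<subseteq> generate G {y}"
  using assms generate_subgroup_incl generate_is_subgroup by simp

text \<open>For a = g ^ m and b = g ^ j the hypothesis forces gcd (ord g) j to divide m, and Bezout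
  writes this gcd as a multiple of j modulo ord g.\<close>

lemma mem_generate_if_ord_dvd:
  assumes fin: "finite (carrier G)" and g: "g \<in> carrier G"
    and a: "a \<in> generate G {g}" and b: "b \<in> generate G {g}" and dvd: "ord a dvd ord b"
  shows "a \<in> generate G {b}"
proof -
  obtain m j :: nat where m: "a = g [^] m" and j: "b = g [^] j"
    using a b generate_pow_on_finite_carrier[OF fin g] by auto
  show ?thesis
  proof (cases "j = 0")
    case True
    then have "a = \<one>"
      using dvd g j m ord_eq_1 by simp
    then show ?thesis by (simp add: generate.one)
  next
    case False
    define d where "d = gcd (ord g) j"
    have ord_b: "ord b = ord g div d"
      using ord_pow_gen[OF g, of j] False j d_def by simp
    have "g [^] (m * ord b) = \<one>"
      using dvd g m by (simp add: pow_eq_id nat_pow_pow[symmetric])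
    then have "d * ord b dvd m * ord b"
      using g ord_b by (simp add: pow_eq_id d_def)
    moreover have "ord b > 0"
      using ord_ge_1[OF fin] b generate_incl[of "{g}"] g by fastforce
    ultimately obtain q where q: "m = d * q"
      by (auto simp: mult.commute[of _ "ord b"] elim!: dvdE)
    obtain u v where uv: "j * u = ord g * v + d"
      using bezout_nat[OF False, of "ord g"] unfolding d_def by (metis gcd.commute)
    have "j * (u * q) = (j * u) * q"
      by (simp only: mult.assoc)
    also have "\<dots> = ord g * (v * q) + m"
      by (simp only: uv) (simp add: q algebra_simps)
    finally have "b [^] (u * q) = g [^] (ord g * (v * q) + m)"
      using g j by (simp add: nat_pow_pow)
    also have "\<dots> = a"
      using g m by (simp add: nat_pow_mult[symmetric] nat_pow_pow[symmetric])
    finally show ?thesis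
      using generate_pow_on_finite_carrier[OF fin] b g generate_incl[of "{g}"] by blast
  qed
qed

lemma p_elements_nested:
  assumes fin: "finite (carrier G)" and g: "g \<in> carrier G"
    and x: "x \<in> p_elements G p" "x \<in> generate G {g}"
    and y: "y \<in> p_elements G p" "y \<in> generate G {g}"
  shows "x \<in> generate G {y} \<or> y \<in> generate G {x}"
proof -
  obtain i j where "ord x = p ^ i" "ord y = p ^ j"
    using x(1) y(1) unfolding p_elements_def by blast
  then have "ord x dvd ord y \<or> ord y dvd ord x"
    by (metis le_imp_power_dvd nat_le_linear)
  then show ?thesis
    using mem_generate_if_ord_dvd[OF fin g] x(2) y(2) by blast
qed

lemma cyclic_subgroup_generatedE:
  assumes "cyclic_group (subgroup_generated G S)"
  obtains g where "g \<in> carrier G" "carrier (subgroup_generated G S) \<subseteq> generate G {g}"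
proof -
  let ?H = "subgroup_generated G S"
  obtain g where g: "g \<in> carrier ?H" and H: "carrier ?H = range (\<lambda>n::int. g [^]\<^bsub>?H\<^esub> n)"
    using group.cyclic_group[OF group_subgroup_generated] assms by blast
  have "g \<in> carrier G"
    using g carrier_subgroup_generated_subset by blast
  moreover have "carrier ?H \<subseteq> generate G {g}"
    using H int_pow_subgroup_generated[OF g] generate_pow[OF \<open>g \<in> carrier G\<close>] by auto
  ultimately show thesis
    by (rule that)
qed

lemma enh_adj_if_mem_generate:
  assumes "x \<in> generate G {y}" "y \<in> carrier G" "x \<noteq> y"
  shows "enh_adj G x y"
proof -
  have x: "x \<in> carrier G"
    using assms(1,2) generate_incl[of "{y}"] by blast
  have "generate G {x, y} \<subseteq> generate G {y}"
    by (rule generate_subgroup_incl)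
      (use assms(1,2) generate.incl[of y "{y}"] generate_is_subgroup[of "{y}"] in auto)
  moreover have "generate G {y} \<subseteq> generate G {x, y}"
    by (rule mono_generate) blast
  ultimately have "subgroup_generated G {x, y} = subgroup_generated G {y}"
    using x assms(2) unfolding subgroup_generated_def by (simp add: Int_absorb1)
  then show ?thesis
    unfolding enh_adj_def using assms(3) cyclic_group_generated by simp
qed

lemma reflclp_enh_adj_p_elements:
  assumes fin: "finite (carrier G)" and x: "x \<in> p_elements G p" and y: "y \<in> p_elements G p"
  shows "(enh_adj G)\<^sup>=\<^sup>= x y \<longleftrightarrow> x \<in> generate G {y} \<or> y \<in> generate G {x}"
proof
  assume "(enh_adj G)\<^sup>=\<^sup>= x y"
  then consider "x = y" | "cyclic_group (subgroup_generated G {x, y})"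
    unfolding enh_adj_def by blast
  then show "x \<in> generate G {y} \<or> y \<in> generate G {x}"
  proof cases
    case 1
    then show ?thesis by (simp add: generate.incl)
  next
    case 2
    then obtain g where "g \<in> carrier G" "carrier (subgroup_generated G {x, y}) \<subseteq> generate G {g}"
      by (rule cyclic_subgroup_generatedE)
    moreover have "{x, y} \<subseteq> carrier (subgroup_generated G {x, y})"
      using x y unfolding p_elements_def by (intro subgroup_generated_subset_carrier_subset) auto
    ultimately show ?thesis
      using p_elements_nested[OF fin _ x _ y] by blast
  qed
next
  assume "x \<in> generate G {y} \<or> y \<in> generate G {x}"
  moreover have "x \<in> carrier G" "y \<in> carrier G"
    using x y unfolding p_elements_def by auto
  ultimately show "(enh_adj G)\<^sup>=\<^sup>= x y"
    using enh_adj_if_mem_generate[of x y] enh_adj_if_mem_generate[of y x] enh_adj_sym[of G y x]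
    by auto
qed

lemma trivially_perfect_p_elements:
  assumes fin: "finite (carrier G)"
  shows "trivially_perfect (p_elements G p) (enh_adj G)"
proof (rule trivially_perfect_comparability)
  show "(enh_adj G)\<^sup>=\<^sup>= x y \<longleftrightarrow> x \<in> generate G {y} \<or> y \<in> generate G {x}"
    if "x \<in> p_elements G p" "y \<in> p_elements G p" for x y
    using reflclp_enh_adj_p_elements[OF fin that] .
  show "x \<in> generate G {z}"
    if "z \<in> p_elements G p" "x \<in> generate G {y}" "y \<in> generate G {z}" for x y z
    using generate_singleton_subset[OF that(3)] that(1,2) unfolding p_elements_def by blast
  show "x \<in> generate G {y} \<or> y \<in> generate G {x}"
    if "x \<in> p_elements G p" "y \<in> p_elements G p" "z \<in> p_elements G p"
      "x \<in> generate G {z}" "y \<in> generate G {z}" for x y z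
    using that(3) p_elements_nested[OF fin _ that(1,4) that(2,5)] unfolding p_elements_def by blast
qed

lemma unique_sylow_normal:
  assumes "sylow_subgroups G p = {P}"
  shows "P \<lhd> G"
proof -
  have P: "subgroup P G" "card P = p ^ multiplicity p (order G)"
    using assms unfolding sylow_subgroups_def by auto
  have "g \<otimes> h \<otimes> inv g \<in> P" if g: "g \<in> carrier G" and h: "h \<in> P" for g h
  proof -
    let ?conj = "\<lambda>h. g \<otimes> h \<otimes> inv g"
    have "inj_on ?conj P"
    proof (rule inj_onI)
      fix a b assume "a \<in> P" "b \<in> P" "?conj a = ?conj b"
      then show "a = b"
        using conjugation_is_inj[OF g] subgroup.mem_carrier[OF P(1)] by blast
    qed
    then have "card (?conj ` P) = card P"
      by (rule card_image)
    moreover have "g <# P #> inv g = ?conj ` P"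
      unfolding l_coset_def r_coset_def by blast
    then have "subgroup (?conj ` P) G"
      using subgroup_conjugation_is_surj2[OF g P(1)] by simp
    ultimately have "?conj ` P \<in> sylow_subgroups G p"
      using P(2) unfolding sylow_subgroups_def by simp
    then have "?conj ` P = P"
      using assms by simp
    then show ?thesis
      using h by blast
  qed
  then show ?thesis
    using P(1) normal_inv_iff by blast
qed

text \<open>The order of the coset P x in G / P divides both ord x and the index of P, which is prime
  to p.\<close>

lemma p_element_mem_unique_sylow:
  assumes fin: "finite (carrier G)" and p: "Factorial_Ring.prime p"
    and syl: "sylow_subgroups G p = {P}" and x: "x \<in> p_elements G p"
  shows "x \<in> P"
proof -
  have P: "subgroup P G" "card P = p ^ multiplicity p (order G)"
    using syl unfolding sylow_subgroups_def by auto
  interpret N: normal P G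
    by (rule unique_sylow_normal[OF syl])
  obtain k where xG: "x \<in> carrier G" and ord_x: "ord x = p ^ k"
    using x unfolding p_elements_def by blast
  let ?Q = "G Mod P" and ?X = "P #> x"
  have X: "?X \<in> carrier ?Q"
    using xG unfolding carrier_FactGroup by auto
  have "?X [^]\<^bsub>?Q\<^esub> (p ^ k) = P #> \<one>"
    using N.FactGroup_pow[OF xG] pow_ord_eq_1[OF xG] ord_x by simp
  then have "?X [^]\<^bsub>?Q\<^esub> (p ^ k) = \<one>\<^bsub>?Q\<^esub>"
    using coset_mult_one[OF subgroup.subset[OF P(1)]] by simp
  then have ord_dvd_pk: "group.ord ?Q ?X dvd p ^ k"
    using group.pow_eq_id[OF N.factorgroup_is_group X] by simp
  have "order ?Q * p ^ multiplicity p (order G) = order G"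
    using lagrange[OF P(1)] P(2) by (simp add: FactGroup_def order_def)
  then have "order ?Q = order G div p ^ multiplicity p (order G)"
    using p by (metis nonzero_mult_div_cancel_right power_not_zero not_prime_0)
  moreover have "order G \<noteq> 0" "\<not> is_unit p"
    using fin p order_gt_0_iff_finite not_prime_unit by auto
  ultimately have "\<not> p dvd order ?Q"
    using multiplicity_decompose by metis
  then have "coprime (p ^ k) (order ?Q)"
    using p by (simp add: prime_imp_coprime)
  then have "group.ord ?Q ?X = 1"
    using ord_dvd_pk group.ord_dvd_group_order[OF N.factorgroup_is_group X]
      coprime_common_divisor_nat by blast
  then have "P #> x = P"
    using group.ord_eq_1[OF N.factorgroup_is_group X] by simp
  then show ?thesis
    using rcos_self[OF xG P(1)] by simp
qed

lemma reflclp_enh_adj_cyclic_sylow: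
  assumes fin: "finite (carrier G)" and p: "Factorial_Ring.prime p"
    and syl: "sylow_subgroups G p = {P}" and cyclic: "cyclic_group (subgroup_generated G P)"
    and x: "x \<in> p_elements G p" and y: "y \<in> p_elements G p"
  shows "(enh_adj G)\<^sup>=\<^sup>= x y"
proof -
  have P: "subgroup P G"
    using syl unfolding sylow_subgroups_def by auto
  obtain g where "g \<in> carrier G" "carrier (subgroup_generated G P) \<subseteq> generate G {g}"
    using cyclic by (rule cyclic_subgroup_generatedE)
  with P have "P \<subseteq> generate G {g}" "g \<in> carrier G"
    using subgroup.carrier_subgroup_generated_subgroup[OF P] by simp_all
  then have "x \<in> generate G {y} \<or> y \<in> generate G {x}"
    using p_element_mem_unique_sylow[OF fin p syl] x y by (intro p_elements_nested[OF fin]) auto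
  then show ?thesis
    using reflclp_enh_adj_p_elements[OF fin x y] by blast
qed

end

theorem mainTheorem3:
  fixes G :: "('a, 'b) monoid_scheme" and n :: nat and p :: "nat \<Rightarrow> nat"
  assumes "group G" and "finite (carrier G)"
    and "n \<ge> 2"
    and "inj_on p {..<n}"
    and "p ` {..<n} = {q. Factorial_Ring.prime q \<and> q dvd order G}"
    and "\<And>i. 2 \<le> i \<Longrightarrow> i < n \<Longrightarrow>
           (\<exists>P. sylow_subgroups G (p i) = {P} \<and> cyclic_group (subgroup_generated G P))"
  shows "berge (strong_prod_vert n (\<lambda>i. p_elements G (p i)))
               (strong_prod_adj n (\<lambda>i. enh_adj G))"
proof (rule berge_strong_prod)
  interpret group G by fact
  show "2 \<le> n" by fact
  show "trivially_perfect (p_elements G (p i)) (enh_adj G)" for i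
    using trivially_perfect_p_elements[OF assms(2)] .
  show "(enh_adj G)\<^sup>=\<^sup>= x y"
    if i: "2 \<le> i" "i < n" and xy: "x \<in> p_elements G (p i)" "y \<in> p_elements G (p i)" for i x y
  proof -
    obtain P where "sylow_subgroups G (p i) = {P}" "cyclic_group (subgroup_generated G P)"
      using assms(6)[OF i] by blast
    moreover have "Factorial_Ring.prime (p i)"
      using assms(5) i(2) by blast
    ultimately show ?thesis
      using reflclp_enh_adj_cyclic_sylow[OF assms(2) _ _ _ xy] by blast
  qed
qed

end
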